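(* Let $\mathcal{V}$ be an equational class and $\mathbf{A}\in\mathsf{FP}(\mathcal{V})$ such that the set $\mathrm{Con}(\mathbf{A})$ of congruences of $\mathbf{A}$ is totally ordered by inclusion. If $\mathsf{C}_{\mathcal{V}}(\mathbf{A})\neq\emptyset$, then $\mathsf{C}_{\mathcal{V}}(\mathbf{A})$ is totally (pre)ordered and $\mathrm{type}(\mathsf{C}_{\mathcal{V}}(\mathbf{A}))\in\{1,0\}$. In particular, if $\mathbf{A}$ is simple, then either $\mathsf{C}_{\mathcal{V}}(\mathbf{A})=\emptyset$ or $\mathrm{type}(\mathsf{C}_{\mathcal{V}}(\mathbf{A}))=1$.
   Context: $\mathsf{FP}(\mathcal{V})$ is the class of finitely presented algebras of $\mathcal{V}$; $\mathbf{F}_{\mathcal{V}}(\omega)$ is the free algebra of $\mathcal{V}$ on countably many generators. An algebra is exact in $\mathcal{V}$ if isomorphic to a finitely generated subalgebra of $\mathbf{F}_{\mathcal{V}}(\omega)$. A coexact unifier of $\mathbf{A}$ is an onto homomorphism $u\colon\mathbf{A}\to\mathbf{E}$ with $\mathbf{E}$ exact in $\mathcal{V}$; for coexact unifiers $u_1\colon\mathbf{A}\to\mathbf{E}_1$, $u_2\colon\mathbf{A}\to\mathbf{E}_2$, $u_2\le u_1$ iff there is a homomorphism $f\colon\mathbf{E}_1\to\mathbf{E}_2$ with $f\circ u_1=u_2$; $\mathsf{C}_{\mathcal{V}}(\mathbf{A})$ is the set of coexact unifiers preordered by $\le$. Types of a nonempty preordered set via $\mu$-sets (complete sets — every element lies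 below a member — of pairwise incomparable elements): $0$ if none exists, $\infty$ if infinite, $\omega$ if finite of size $>1$, $1$ if of size $1$. *)

theory Defs
  imports Main
begin

datatype ('f, 'v) trm = Var 'v | Fn 'f "('f, 'v) trm list"

fun wf_trm :: "('f \<Rightarrow> nat) \<Rightarrow> ('f, 'v) trm \<Rightarrow> bool" where
  "wf_trm ar (Var v) = True"
| "wf_trm ar (Fn f ts) = (length ts = ar f \<and> (\<forall>t\<in>set ts. wf_trm ar t))"

fun vars :: "('f, 'v) trm \<Rightarrow> 'v set" where
  "vars (Var v) = {v}"
| "vars (Fn f ts) = (\<Union>t\<in>set ts. vars t)"

fun subst :: "('v \<Rightarrow> ('f, 'w) trm) \<Rightarrow> ('f, 'v) trm \<Rightarrow> ('f, 'w) trm" where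
  "subst \<sigma> (Var v) = \<sigma> v"
| "subst \<sigma> (Fn f ts) = Fn f (map (subst \<sigma>) ts)"

record ('a, 'f) alg =
  car :: "'a set"
  ops :: "'f \<Rightarrow> 'a list \<Rightarrow> 'a"

fun eval :: "('a, 'f) alg \<Rightarrow> ('v \<Rightarrow> 'a) \<Rightarrow> ('f, 'v) trm \<Rightarrow> 'a" where
  "eval A h (Var v) = h v"
| "eval A h (Fn f ts) = ops A f (map (eval A h) ts)"

definition is_alg :: "('f \<Rightarrow> nat) \<Rightarrow> ('a, 'f) alg \<Rightarrow> bool" where
  "is_alg ar A \<longleftrightarrow> (\<forall>f xs. length xs = ar f \<and> set xs \<subseteq> car A \<longrightarrow> ops A f xs \<in> car A)"

definition models :: "('f \<Rightarrow> nat) \<Rightarrow> (('f, nat) trm \<times> ('f, nat) trm) set \<Rightarrow> ('a, 'f) alg \<Rightarrow> bool" where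
  "models ar E A \<longleftrightarrow> is_alg ar A \<and>
     (\<forall>(s, t)\<in>E. \<forall>h. (\<forall>v. h v \<in> car A) \<longrightarrow> eval A h s = eval A h t)"

definition hom :: "('f \<Rightarrow> nat) \<Rightarrow> ('a, 'f) alg \<Rightarrow> ('b, 'f) alg \<Rightarrow> ('a \<Rightarrow> 'b) \<Rightarrow> bool" where
  "hom ar A B h \<longleftrightarrow> h ` car A \<subseteq> car B \<and>
     (\<forall>f xs. length xs = ar f \<and> set xs \<subseteq> car A \<longrightarrow> h (ops A f xs) = ops B f (map h xs))"

definition isomorphic :: "('f \<Rightarrow> nat) \<Rightarrow> ('a, 'f) alg \<Rightarrow> ('b, 'f) alg \<Rightarrow> bool" where
  "isomorphic ar A B \<longleftrightarrow> (\<exists>h. hom ar A B h \<and> bij_betw h (car A) (car B))"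

definition congruence :: "('f \<Rightarrow> nat) \<Rightarrow> ('a, 'f) alg \<Rightarrow> 'a rel \<Rightarrow> bool" where
  "congruence ar A \<theta> \<longleftrightarrow> equiv (car A) \<theta> \<and>
     (\<forall>f xs ys. length xs = ar f \<and> list_all2 (\<lambda>x y. (x, y) \<in> \<theta>) xs ys
        \<longrightarrow> (ops A f xs, ops A f ys) \<in> \<theta>)"

definition Con :: "('f \<Rightarrow> nat) \<Rightarrow> ('a, 'f) alg \<Rightarrow> 'a rel set" where
  "Con ar A = {\<theta>. congruence ar A \<theta>}"

definition Cg :: "('f \<Rightarrow> nat) \<Rightarrow> ('a, 'f) alg \<Rightarrow> 'a rel \<Rightarrow> 'a rel" where
  "Cg ar A R = \<Inter>{\<theta>. congruence ar A \<theta> \<and> R \<subseteq> \<theta>}"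

definition simple :: "('f \<Rightarrow> nat) \<Rightarrow> ('a, 'f) alg \<Rightarrow> bool" where
  "simple ar A \<longleftrightarrow> Id_on (car A) \<noteq> car A \<times> car A \<and>
     Con ar A = {Id_on (car A), car A \<times> car A}"

definition quot :: "('a, 'f) alg \<Rightarrow> 'a rel \<Rightarrow> ('a set, 'f) alg" where
  "quot A \<theta> = \<lparr> car = car A // \<theta>,
      ops = (\<lambda>f Xs. \<theta> `` {ops A f (map (\<lambda>X. SOME x. x \<in> X) Xs)}) \<rparr>"

definition Sg :: "('f \<Rightarrow> nat) \<Rightarrow> ('a, 'f) alg \<Rightarrow> 'a set \<Rightarrow> 'a set" where
  "Sg ar A G = \<Inter>{S. G \<subseteq> S \<and> S \<subseteq> car A \<and>
     (\<forall>f xs. length xs = ar f \<and> set xs \<subseteq> S \<longrightarrow> ops A f xs \<in> S)}"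

definition subalg :: "('a, 'f) alg \<Rightarrow> 'a set \<Rightarrow> ('a, 'f) alg" where
  "subalg A S = \<lparr> car = S, ops = ops A \<rparr>"

inductive eqc :: "('f \<Rightarrow> nat) \<Rightarrow> (('f, nat) trm \<times> ('f, nat) trm) set
                  \<Rightarrow> ('f, nat) trm \<Rightarrow> ('f, nat) trm \<Rightarrow> bool"
  for ar E where
  eqc_ax: "(s, t) \<in> E \<Longrightarrow> (\<forall>v. wf_trm ar (\<sigma> v)) \<Longrightarrow> eqc ar E (subst \<sigma> s) (subst \<sigma> t)"
| eqc_refl: "wf_trm ar t \<Longrightarrow> eqc ar E t t"
| eqc_sym: "eqc ar E s t \<Longrightarrow> eqc ar E t s"
| eqc_trans: "eqc ar E s t \<Longrightarrow> eqc ar E t u \<Longrightarrow> eqc ar E s u"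
| eqc_cong: "length ss = ar f \<Longrightarrow> list_all2 (eqc ar E) ss ts \<Longrightarrow> eqc ar E (Fn f ss) (Fn f ts)"

definition term_alg :: "('f \<Rightarrow> nat) \<Rightarrow> nat set \<Rightarrow> (('f, nat) trm, 'f) alg" where
  "term_alg ar X = \<lparr> car = {t. wf_trm ar t \<and> vars t \<subseteq> X}, ops = Fn \<rparr>"

text \<open>Free algebra F_V(X) of V = Mod(E) on the generators X (X = UNIV gives F_V(omega)).\<close>
definition free_alg :: "('f \<Rightarrow> nat) \<Rightarrow> (('f, nat) trm \<times> ('f, nat) trm) set \<Rightarrow> nat set
                        \<Rightarrow> (('f, nat) trm set, 'f) alg" where
  "free_alg ar E X = quot (term_alg ar X)
     {(s, t). s \<in> car (term_alg ar X) \<and> t \<in> car (term_alg ar X) \<and> eqc ar E s t}"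

definition fin_pres :: "('f \<Rightarrow> nat) \<Rightarrow> (('f, nat) trm \<times> ('f, nat) trm) set \<Rightarrow> ('a, 'f) alg \<Rightarrow> bool" where
  "fin_pres ar E A \<longleftrightarrow> models ar E A \<and>
     (\<exists>n R. finite R \<and> R \<subseteq> car (free_alg ar E {..<n}) \<times> car (free_alg ar E {..<n}) \<and>
        isomorphic ar A (quot (free_alg ar E {..<n}) (Cg ar (free_alg ar E {..<n}) R)))"

definition exact :: "('f \<Rightarrow> nat) \<Rightarrow> (('f, nat) trm \<times> ('f, nat) trm) set \<Rightarrow> ('b, 'f) alg \<Rightarrow> bool" where
  "exact ar E B \<longleftrightarrow> (\<exists>G. finite G \<and> G \<subseteq> car (free_alg ar E UNIV) \<and>
     isomorphic ar B (subalg (free_alg ar E UNIV) (Sg ar (free_alg ar E UNIV) G)))"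

text \<open>Every exact algebra is isomorphic to one whose carrier consists of elements of
  F_V(omega), so the codomains are taken of that type (this is the same preordered
  class up to equivalence).  u is taken extensional (undefined outside car A).\<close>
definition coexact :: "('f \<Rightarrow> nat) \<Rightarrow> (('f, nat) trm \<times> ('f, nat) trm) set \<Rightarrow> ('a, 'f) alg
                       \<Rightarrow> (('a \<Rightarrow> ('f, nat) trm set) \<times> (('f, nat) trm set, 'f) alg) set" where
  "coexact ar E A = {(u, B). exact ar E B \<and> hom ar A B u \<and> u ` car A = car B \<and>
                       (\<forall>x. x \<notin> car A \<longrightarrow> u x = undefined)}"

definition unif_le :: "('f \<Rightarrow> nat) \<Rightarrow> ('a, 'f) alg
     \<Rightarrow> ('a \<Rightarrow> 'b) \<times> ('b, 'f) alg \<Rightarrow> ('a \<Rightarrow> 'b) \<times> ('b, 'f) alg \<Rightarrow> bool" where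
  "unif_le ar A p q \<longleftrightarrow> (case p of (u2, B2) \<Rightarrow> case q of (u1, B1) \<Rightarrow>
      \<exists>f. hom ar B1 B2 f \<and> (\<forall>x\<in>car A. f (u1 x) = u2 x))"

definition complete_set :: "'p set \<Rightarrow> ('p \<Rightarrow> 'p \<Rightarrow> bool) \<Rightarrow> 'p set \<Rightarrow> bool" where
  "complete_set P le M \<longleftrightarrow> M \<subseteq> P \<and> (\<forall>x\<in>P. \<exists>m\<in>M. le x m)"

definition mu_set :: "'p set \<Rightarrow> ('p \<Rightarrow> 'p \<Rightarrow> bool) \<Rightarrow> 'p set \<Rightarrow> bool" where
  "mu_set P le M \<longleftrightarrow> complete_set P le M \<and>
     (\<forall>m\<in>M. \<forall>m'\<in>M. m \<noteq> m' \<longrightarrow> \<not> le m m' \<and> \<not> le m' m)"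

datatype utype = Type0 | Type1 | TypeOmega | TypeInf

definition type_of :: "'p set \<Rightarrow> ('p \<Rightarrow> 'p \<Rightarrow> bool) \<Rightarrow> utype" where
  "type_of P le =
    (if \<not> (\<exists>M. mu_set P le M) then Type0
     else if \<exists>M. mu_set P le M \<and> infinite M then TypeInf
     else if \<exists>M. mu_set P le M \<and> card M > 1 then TypeOmega
     else Type1)"

definition totally_preordered :: "'p set \<Rightarrow> ('p \<Rightarrow> 'p \<Rightarrow> bool) \<Rightarrow> bool" where
  "totally_preordered P le \<longleftrightarrow> (\<forall>x\<in>P. \<forall>y\<in>P. le x y \<or> le y x)"

end

theory Submission
  imports Defs
begin

text \<open>A coexact unifier is an onto homomorphism, so by the homomorphism theorem it is
  determined up to equivalence in the preorder by its kernel: \<open>u\<^sub>2 \<le> u\<^sub>1\<close> as soon as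
  \<open>ker u\<^sub>1 \<subseteq> ker u\<^sub>2\<close>.  Kernels are congruences of \<open>A\<close>, so if \<open>Con A\<close> is a chain the
  unifiers are totally preordered, and then every \<open>\<mu>\<close>-set is a singleton, which leaves
  only the types 1 and 0.  For simple \<open>A\<close>, \<open>Con A\<close> is a finite chain, so the kernels
  of the unifiers have a least member, whose unifier is greatest: type 1.\<close>

definition hom_kernel :: "('a, 'f) alg \<Rightarrow> ('a \<Rightarrow> 'b) \<Rightarrow> 'a rel" where
  "hom_kernel A u = {(x, y). x \<in> car A \<and> y \<in> car A \<and> u x = u y}"

lemma hom_kernel_in_Con:
  assumes alg: "is_alg ar A" and h: "hom ar A B u"
  shows "hom_kernel A u \<in> Con ar A"
proof -
  have "equiv (car A) (hom_kernel A u)"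
    by (rule equivI) (auto simp: hom_kernel_def refl_on_def sym_def trans_def)
  moreover have "(ops A f xs, ops A f ys) \<in> hom_kernel A u"
    if l: "length xs = ar f" and r: "list_all2 (\<lambda>x y. (x, y) \<in> hom_kernel A u) xs ys" for f xs ys
  proof -
    have ly: "length ys = ar f" using l r by (simp add: list_all2_lengthD)
    have sx: "set xs \<subseteq> car A" and sy: "set ys \<subseteq> car A" and mm: "map u xs = map u ys"
      using r by (induct rule: list_all2_induct) (auto simp: hom_kernel_def)
    have "u (ops A f xs) = ops B f (map u xs)" using h l sx by (simp add: hom_def)
    also have "\<dots> = u (ops A f ys)" using h ly sy mm by (simp add: hom_def)
    finally show ?thesis using alg l ly sx sy by (auto simp: hom_kernel_def is_alg_def)
  qed
  ultimately show ?thesis by (auto simp: Con_def congruence_def)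
qed

lemma hom_factor_through_onto:
  assumes alg: "is_alg ar A"
    and h1: "hom ar A B1 u1" and onto: "u1 ` car A = car B1"
    and h2: "hom ar A B2 u2"
    and ker: "hom_kernel A u1 \<subseteq> hom_kernel A u2"
  shows "\<exists>g. hom ar B1 B2 g \<and> (\<forall>x\<in>car A. g (u1 x) = u2 x)"
proof -
  define g where "g = u2 \<circ> inv_into (car A) u1"
  have inv_in: "inv_into (car A) u1 y \<in> car A" and inv_eq: "u1 (inv_into (car A) u1 y) = y"
    if "y \<in> car B1" for y
    using that onto by (auto intro: inv_into_into f_inv_into_f)
  have g_u1: "g (u1 x) = u2 x" if x: "x \<in> car A" for x
  proof -
    have "(inv_into (car A) u1 (u1 x), x) \<in> hom_kernel A u1"
      using x onto inv_in[of "u1 x"] inv_eq[of "u1 x"] by (auto simp: hom_kernel_def)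
    with ker show ?thesis by (auto simp: hom_kernel_def g_def)
  qed
  have "hom ar B1 B2 g"
    unfolding hom_def
  proof (intro conjI allI impI)
    show "g ` car B1 \<subseteq> car B2"
      using h2 inv_in by (auto simp: g_def hom_def)
  next
    fix f ys assume ys: "length ys = ar f \<and> set ys \<subseteq> car B1"
    define xs where "xs = map (inv_into (car A) u1) ys"
    have lx: "length xs = ar f" and sx: "set xs \<subseteq> car A"
      using ys inv_in by (auto simp: xs_def)
    have ys_eq: "ys = map u1 xs"
      using ys inv_eq by (simp add: xs_def map_idI subset_iff)
    have "g (ops B1 f ys) = g (u1 (ops A f xs))" using h1 lx sx ys_eq by (simp add: hom_def)
    also have "\<dots> = u2 (ops A f xs)" using g_u1 alg lx sx by (simp add: is_alg_def)
    also have "\<dots> = ops B2 f (map g ys)" using h2 lx sx by (simp add: hom_def xs_def g_def)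
    finally show "g (ops B1 f ys) = ops B2 f (map g ys)" .
  qed
  with g_u1 show ?thesis by blast
qed

lemma unif_le_if_hom_kernel_subset:
  assumes alg: "is_alg ar A"
    and c1: "(u1, B1) \<in> coexact ar E A" and c2: "(u2, B2) \<in> coexact ar E A"
    and ker: "hom_kernel A u1 \<subseteq> hom_kernel A u2"
  shows "unif_le ar A (u2, B2) (u1, B1)"
  using hom_factor_through_onto[OF alg _ _ _ ker] c1 c2
  by (simp add: coexact_def unif_le_def)

lemma coexact_totally_preordered:
  assumes alg: "is_alg ar A"
    and chain: "\<forall>\<theta>1\<in>Con ar A. \<forall>\<theta>2\<in>Con ar A. \<theta>1 \<subseteq> \<theta>2 \<or> \<theta>2 \<subseteq> \<theta>1"
  shows "totally_preordered (coexact ar E A) (unif_le ar A)"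
  unfolding totally_preordered_def
proof (intro ballI)
  fix p q assume p: "p \<in> coexact ar E A" and q: "q \<in> coexact ar E A"
  obtain u1 B1 u2 B2 where pq: "p = (u1, B1)" "q = (u2, B2)" by fastforce
  have "hom_kernel A u1 \<in> Con ar A" "hom_kernel A u2 \<in> Con ar A"
    using p q pq hom_kernel_in_Con[OF alg] by (auto simp: coexact_def)
  with chain have "hom_kernel A u1 \<subseteq> hom_kernel A u2 \<or> hom_kernel A u2 \<subseteq> hom_kernel A u1"
    by blast
  then show "unif_le ar A p q \<or> unif_le ar A q p"
    using unif_le_if_hom_kernel_subset[OF alg] p q pq by metis
qed

lemma coexact_has_greatest_if_finite_Con:
  assumes alg: "is_alg ar A" and fin: "finite (Con ar A)"
    and chain: "\<forall>\<theta>1\<in>Con ar A. \<forall>\<theta>2\<in>Con ar A. \<theta>1 \<subseteq> \<theta>2 \<or> \<theta>2 \<subseteq> \<theta>1"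
    and ne: "coexact ar E A \<noteq> {}"
  shows "\<exists>m\<in>coexact ar E A. \<forall>p\<in>coexact ar E A. unif_le ar A p m"
proof -
  define K where "K = (\<lambda>(u, B). hom_kernel A u) ` coexact ar E A"
  have K_Con: "K \<subseteq> Con ar A"
    using hom_kernel_in_Con[OF alg] by (auto simp: K_def coexact_def)
  have "finite K" using finite_subset[OF K_Con fin] .
  moreover have "K \<noteq> {}" using ne by (simp add: K_def)
  ultimately obtain k where k: "k \<in> K" and k_min: "\<forall>k'\<in>K. k' \<subseteq> k \<longrightarrow> k = k'"
    using finite_has_minimal by metis
  have k_least: "k \<subseteq> k'" if k': "k' \<in> K" for k'
  proof -
    from chain k k' K_Con have "k \<subseteq> k' \<or> k' \<subseteq> k" by blast
    with k_min k' show ?thesis by blast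
  qed
  from k obtain u B where m: "(u, B) \<in> coexact ar E A" and ku: "k = hom_kernel A u"
    by (auto simp: K_def)
  have "unif_le ar A p (u, B)" if p: "p \<in> coexact ar E A" for p
  proof -
    obtain v C where pv: "p = (v, C)" by fastforce
    have "hom_kernel A v \<in> K" using p pv unfolding K_def by force
    with k_least ku have "hom_kernel A u \<subseteq> hom_kernel A v" by blast
    with p pv show ?thesis using unif_le_if_hom_kernel_subset[OF alg m] by simp
  qed
  with m show ?thesis by blast
qed

lemma mu_set_singleton_if_totally_preordered:
  assumes "mu_set P le M" "totally_preordered P le" "P \<noteq> {}"
  shows "\<exists>m. M = {m}"
proof -
  from assms(1,3) obtain m where "m \<in> M"
    unfolding mu_set_def complete_set_def by blast
  with assms(1,2) have "M = {m}"
    unfolding mu_set_def complete_set_def totally_preordered_def by blast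
  then show ?thesis by blast
qed

lemma type_of_totally_preordered:
  assumes "totally_preordered P le" "P \<noteq> {}"
  shows "type_of P le = (if \<exists>M. mu_set P le M then Type1 else Type0)"
  using mu_set_singleton_if_totally_preordered[OF _ assms]
  unfolding type_of_def by fastforce

lemma type_of_greatest:
  assumes "totally_preordered P le" "m \<in> P" "\<forall>p\<in>P. le p m"
  shows "type_of P le = Type1"
proof -
  have "mu_set P le {m}" using assms by (auto simp: mu_set_def complete_set_def)
  moreover have "P \<noteq> {}" using assms(2) by blast
  ultimately show ?thesis using type_of_totally_preordered[OF assms(1)] by auto
qed

lemma simple_Con_chain:
  "simple ar A \<Longrightarrow> \<forall>\<theta>1\<in>Con ar A. \<forall>\<theta>2\<in>Con ar A. \<theta>1 \<subseteq> \<theta>2 \<or> \<theta>2 \<subseteq> \<theta>1"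
  by (auto simp: simple_def)

lemma simple_finite_Con: "simple ar A \<Longrightarrow> finite (Con ar A)"
  by (simp add: simple_def)

theorem corollary3p9:
  fixes ar :: "'f \<Rightarrow> nat"
    and E :: "(('f, nat) trm \<times> ('f, nat) trm) set"
    and A :: "('a, 'f) alg"
  assumes E_wf: "\<forall>(s, t)\<in>E. wf_trm ar s \<and> wf_trm ar t"
    and A_fp: "fin_pres ar E A"
  shows "((\<forall>\<theta>1\<in>Con ar A. \<forall>\<theta>2\<in>Con ar A. \<theta>1 \<subseteq> \<theta>2 \<or> \<theta>2 \<subseteq> \<theta>1) \<longrightarrow>
           coexact ar E A \<noteq> {} \<longrightarrow>
           totally_preordered (coexact ar E A) (unif_le ar A) \<and>
           type_of (coexact ar E A) (unif_le ar A) \<in> {Type1, Type0})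
       \<and> (simple ar A \<longrightarrow>
           coexact ar E A = {} \<or> type_of (coexact ar E A) (unif_le ar A) = Type1)"
proof -
  have alg: "is_alg ar A" using A_fp by (simp add: fin_pres_def models_def)
  show ?thesis
  proof (intro conjI impI)
    assume chain: "\<forall>\<theta>1\<in>Con ar A. \<forall>\<theta>2\<in>Con ar A. \<theta>1 \<subseteq> \<theta>2 \<or> \<theta>2 \<subseteq> \<theta>1"
      and ne: "coexact ar E A \<noteq> {}"
    from chain show total: "totally_preordered (coexact ar E A) (unif_le ar A)"
      by (rule coexact_totally_preordered[OF alg])
    show "type_of (coexact ar E A) (unif_le ar A) \<in> {Type1, Type0}"
      using type_of_totally_preordered[OF total ne] by simp
  next
    assume simple: "simple ar A"
    note chain = simple_Con_chain[OF simple]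
    show "coexact ar E A = {} \<or> type_of (coexact ar E A) (unif_le ar A) = Type1"
    proof (cases "coexact ar E A = {}")
      case False
      then obtain m where "m \<in> coexact ar E A" "\<forall>p\<in>coexact ar E A. unif_le ar A p m"
        using coexact_has_greatest_if_finite_Con[OF alg simple_finite_Con[OF simple] chain] by blast
      then have "type_of (coexact ar E A) (unif_le ar A) = Type1"
        by (rule type_of_greatest[OF coexact_totally_preordered[OF alg chain]])
      then show ?thesis ..
    qed simp
  qed
qed

end
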